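(* Let $\mathbf{L}'$ be an ortholattice with lattice reduct $\mathbf{L}$, and let $(P_{\mathbf{L}},E,\mathscr{T}_{\mathbf{L}},g)$ be its dual. Then for all $x\in P_{\mathbf{L}}$ and all $x,y\in P_{\mathbf{L}}$ the map $g$ satisfies: (M1) $g(g(x))=x$; (M2) $xE\subseteq yE\implies Eg(x)\subseteq Eg(y)$; (M3) $Ex\subseteq Ey\implies g(x)E\subseteq g(y)E$; (O) for every $x\in P_{\mathbf{L}}$ there exists $y\in P_{\mathbf{L}}$ with $yE\subseteq xE$ and $Ey\subseteq Eg(x)$.
   Context: An ortholattice is a bounded lattice $(L;\vee,\wedge,0,1)$ with an operation $'$ satisfying $a''=a$, $a\wedge a'=0$, $a\vee a'=1$ and the De Morgan laws. A partial homomorphism $\mathbf{L}\to\mathbf{2}$ is a partial map $f:L\to\{0,1\}$ whose domain is a $(0,1)$-sublattice and whose restriction is a $(0,1)$-homomorphism; an MPH is one with no proper extension; $P_{\mathbf{L}}$ is the set of MPHs. $(f,h)\in E$ iff $f(a)\le h(a)$ for all $a\in\mathrm{dom}f\cap\mathrm{dom}h$. $\mathscr{T}_{\mathbf{L}}$ has subbasis of closed sets $V_a=\{f: f(a)=0\}$, $W_a=\{f: f(a)=1\}$. The dual of $\mathbf{L}'$ is $(P_{\mathbf{L}},E,\mathscr{T}_{\mathbf{L}},g)$ where $g(f)(a)=0$ if $f(a')=1$, $g(f)(a)=1$ if $f(a')=0$, undefined otherwise (an MPH). For $x$: $xE=\{y:(x,y)\in E\}$, $Ex=\{y:(y,x)\in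 E\}$. *)

theory Defs
  imports "HOL-Library.Complemented_Lattices"
begin

text \<open>Partial maps L to 2 are modelled as 'a => bool option (False = 0, True = 1).\<close>

definition partial_hom :: "('a::bounded_lattice \<Rightarrow> bool option) \<Rightarrow> bool" where
  "partial_hom f \<longleftrightarrow>
     bot \<in> dom f \<and> top \<in> dom f \<and>
     (\<forall>a\<in>dom f. \<forall>b\<in>dom f. sup a b \<in> dom f \<and> inf a b \<in> dom f) \<and>
     f bot = Some False \<and> f top = Some True \<and>
     (\<forall>a\<in>dom f. \<forall>b\<in>dom f.
        f (sup a b) = Some (the (f a) \<or> the (f b)) \<and>
        f (inf a b) = Some (the (f a) \<and> the (f b)))"

definition MPH :: "('a::bounded_lattice \<Rightarrow> bool option) \<Rightarrow> bool" where
  "MPH f \<longleftrightarrow> partial_hom f \<and> (\<forall>h. partial_hom h \<and> f \<subseteq>\<^sub>m h \<longrightarrow> h = f)"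

definition PL :: "('a::bounded_lattice \<Rightarrow> bool option) set" where
  "PL = {f. MPH f}"

definition dualE :: "('a \<Rightarrow> bool option) \<Rightarrow> ('a \<Rightarrow> bool option) \<Rightarrow> bool" where
  "dualE f h \<longleftrightarrow> (\<forall>a\<in>dom f \<inter> dom h. the (f a) \<le> the (h a))"

definition dualg :: "('a::orthocomplemented_lattice \<Rightarrow> bool option) \<Rightarrow> ('a \<Rightarrow> bool option)" where
  "dualg f = (\<lambda>a. case f (- a) of Some True \<Rightarrow> Some False
                                | Some False \<Rightarrow> Some True
                                | None \<Rightarrow> None)"

text \<open>xE and Ex, taken inside P_L.\<close>
definition succE :: "('a::bounded_lattice \<Rightarrow> bool option) \<Rightarrow> ('a \<Rightarrow> bool option) set" where
  "succE x = {y \<in> PL. dualE x y}"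

definition predE :: "('a::bounded_lattice \<Rightarrow> bool option) \<Rightarrow> ('a \<Rightarrow> bool option) set" where
  "predE x = {y \<in> PL. dualE y x}"

end

theory Submission
  imports Defs
begin

text \<open>The orthocomplement turns a partial homomorphism f into g(f) with g(f)(a) = \<not> f(-a);
g is an involution and is monotone for map extension, so it permutes the MPHs. Moreover
f E g(h) iff h E g(f), so g maps xE onto Eg(x) and Ex onto g(x)E, which gives (M2) and (M3).
For (O), the elements sent to 1 by x generate a filter that is disjoint from the ideal
generated by their orthocomplements; the partial homomorphism that is 1 on the filter and
0 on the ideal extends by Zorn's lemma to an MPH y, and y witnesses (O).\<close>

lemma dualg_dualg [simp]: "dualg (dualg f) = (f::'a::orthocomplemented_lattice \<Rightarrow> bool option)"
  unfolding dualg_def by (rule ext) (auto split: option.splits bool.splits)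

lemma dualg_eq_Some_iff: "dualg f a = Some v \<longleftrightarrow> f (- a) = Some (\<not> v)"
  unfolding dualg_def by (auto split: option.splits bool.splits)

lemma dom_dualg: "a \<in> dom (dualg f) \<longleftrightarrow> - a \<in> dom f"
  unfolding dualg_def dom_def by (auto split: option.splits bool.splits)

lemma map_le_dualg: "f \<subseteq>\<^sub>m h \<Longrightarrow> dualg f \<subseteq>\<^sub>m dualg h"
  unfolding map_le_def dualg_def dom_def by (auto split: option.splits bool.splits)

lemma partial_hom_dualg:
  fixes f :: "'a::orthocomplemented_lattice \<Rightarrow> bool option"
  assumes "partial_hom f"
  shows "partial_hom (dualg f)"
proof -
  have dualg_the: "dualg f a = Some (\<not> the (f (- a)))" if "a \<in> dom (dualg f)" for a
    using that by (auto simp: dom_dualg dualg_eq_Some_iff)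
  show ?thesis
    unfolding partial_hom_def
  proof (intro conjI ballI)
    show "bot \<in> dom (dualg f)" "top \<in> dom (dualg f)"
      "dualg f bot = Some False" "dualg f top = Some True"
      using assms by (simp_all add: partial_hom_def dom_dualg dualg_eq_Some_iff)
  next
    fix a b assume a: "a \<in> dom (dualg f)" and b: "b \<in> dom (dualg f)"
    then have "- a \<in> dom f" "- b \<in> dom f" by (simp_all add: dom_dualg)
    then have "inf (- a) (- b) \<in> dom f" "sup (- a) (- b) \<in> dom f"
      "f (inf (- a) (- b)) = Some (the (f (- a)) \<and> the (f (- b)))"
      "f (sup (- a) (- b)) = Some (the (f (- a)) \<or> the (f (- b)))"
      using assms unfolding partial_hom_def by blast+
    then show "sup a b \<in> dom (dualg f)" "inf a b \<in> dom (dualg f)"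
      "dualg f (sup a b) = Some (the (dualg f a) \<or> the (dualg f b))"
      "dualg f (inf a b) = Some (the (dualg f a) \<and> the (dualg f b))"
      by (simp_all add: dom_dualg dualg_eq_Some_iff dualg_the[OF a] dualg_the[OF b])
  qed
qed

lemma MPH_dualg:
  fixes f :: "'a::orthocomplemented_lattice \<Rightarrow> bool option"
  assumes "MPH f"
  shows "MPH (dualg f)"
  unfolding MPH_def
proof (intro conjI allI impI)
  show "partial_hom (dualg f)"
    using assms partial_hom_dualg unfolding MPH_def by blast
  fix h assume h: "partial_hom h \<and> dualg f \<subseteq>\<^sub>m h"
  then have "f \<subseteq>\<^sub>m dualg h" using map_le_dualg by fastforce
  then have "dualg h = f" using assms partial_hom_dualg h unfolding MPH_def by blast
  then show "h = dualg f" by auto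
qed

lemma dualg_in_PL_iff [simp]: "dualg f \<in> PL \<longleftrightarrow> (f::'a::orthocomplemented_lattice \<Rightarrow> bool option) \<in> PL"
  unfolding PL_def using MPH_dualg by fastforce

lemma dualE_iff: "dualE f h \<longleftrightarrow> (\<forall>a. f a = Some True \<longrightarrow> h a \<noteq> Some False)"
proof -
  have "the (f a) \<le> the (h a) \<longleftrightarrow> \<not> (f a = Some True \<and> h a = Some False)"
    if "a \<in> dom f \<inter> dom h" for a
    using that by (auto simp: le_bool_def)
  then show ?thesis
    unfolding dualE_def by (auto simp: dom_def)
qed

lemma dualE_dualg_commute:
  "dualE f (dualg h) \<longleftrightarrow> dualE h (dualg (f::'a::orthocomplemented_lattice \<Rightarrow> bool option))"
  unfolding dualE_iff dualg_eq_Some_iff by (metis ortho_involution)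

lemma predE_dualg: "predE (dualg x) = dualg ` succE (x::'a::orthocomplemented_lattice \<Rightarrow> bool option)"
proof -
  have "predE (dualg x) = {w. dualg w \<in> succE x}"
    unfolding predE_def succE_def by (auto simp: dualE_dualg_commute)
  also have "\<dots> = dualg ` succE x"
    by (auto intro: image_eqI[where x = "dualg _"])
  finally show ?thesis .
qed

lemma succE_dualg: "succE (dualg x) = dualg ` predE (x::'a::orthocomplemented_lattice \<Rightarrow> bool option)"
proof -
  have "succE (dualg x) = {w. dualg w \<in> predE x}"
    unfolding predE_def succE_def
    using dualE_dualg_commute[of "dualg x" "dualg w" for w] by auto
  also have "\<dots> = dualg ` predE x"
    by (auto intro: image_eqI[where x = "dualg _"])
  finally show ?thesis .
qed

lemma map_le_SomeD: "f \<subseteq>\<^sub>m g \<Longrightarrow> f a = Some v \<Longrightarrow> g a = Some v"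
  unfolding map_le_def dom_def by auto

lemma map_le_chain_has_upper_bound:
  fixes C :: "('a \<Rightarrow> 'b option) set"
  assumes chain: "\<And>f h. f \<in> C \<Longrightarrow> h \<in> C \<Longrightarrow> f \<subseteq>\<^sub>m h \<or> h \<subseteq>\<^sub>m f"
  shows "\<exists>U. dom U = (\<Union>f\<in>C. dom f) \<and> (\<forall>f\<in>C. f \<subseteq>\<^sub>m U)"
proof -
  define U where
    "U a = (if \<exists>f\<in>C. a \<in> dom f then (SOME f. f \<in> C \<and> a \<in> dom f) a else None)" for a
  have agree: "U a = f a" if f: "f \<in> C" "a \<in> dom f" for f a
  proof -
    define g where "g = (SOME f. f \<in> C \<and> a \<in> dom f)"
    have g: "g \<in> C" "a \<in> dom g"
      using someI[of "\<lambda>f. f \<in> C \<and> a \<in> dom f" f] f unfolding g_def by auto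
    have "U a = g a" using f unfolding U_def g_def by auto
    also have "g a = f a"
      using chain[OF g(1) f(1)]
    proof
      assume "g \<subseteq>\<^sub>m f"
      then show ?thesis using g(2) unfolding map_le_def by blast
    next
      assume "f \<subseteq>\<^sub>m g"
      then show ?thesis using f(2) unfolding map_le_def by (blast intro: sym)
    qed
    finally show ?thesis .
  qed
  show ?thesis
  proof (intro exI conjI)
    show "dom U = (\<Union>f\<in>C. dom f)"
    proof (intro set_eqI iffI)
      fix a assume "a \<in> dom U"
      then show "a \<in> (\<Union>f\<in>C. dom f)" unfolding U_def by (auto split: if_splits)
    next
      fix a assume "a \<in> (\<Union>f\<in>C. dom f)"
      then obtain f where "f \<in> C" "a \<in> dom f" by blast
      then show "a \<in> dom U" using agree by (simp add: domIff)
    qed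
    show "\<forall>f\<in>C. f \<subseteq>\<^sub>m U"
      using agree unfolding map_le_def by auto
  qed
qed

lemma partial_hom_chain_has_upper_bound:
  fixes C :: "('a::bounded_lattice \<Rightarrow> bool option) set"
  assumes "C \<noteq> {}" and partial_homs: "\<And>f. f \<in> C \<Longrightarrow> partial_hom f"
    and chain: "\<And>f h. f \<in> C \<Longrightarrow> h \<in> C \<Longrightarrow> f \<subseteq>\<^sub>m h \<or> h \<subseteq>\<^sub>m f"
  shows "\<exists>U. partial_hom U \<and> (\<forall>f\<in>C. f \<subseteq>\<^sub>m U)"
proof -
  obtain U where dom_U: "dom U = (\<Union>f\<in>C. dom f)" and ub: "\<forall>f\<in>C. f \<subseteq>\<^sub>m U"
    using map_le_chain_has_upper_bound[OF chain] by metis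
  have agree: "U a = k a" if "k \<in> C" "a \<in> dom k" for k a
    using ub that by (simp add: map_le_def)
  have common_member: "\<exists>k\<in>C. a \<in> dom k \<and> b \<in> dom k" if "a \<in> dom U" "b \<in> dom U" for a b
  proof -
    from that obtain f h where "f \<in> C" "a \<in> dom f" "h \<in> C" "b \<in> dom h"
      unfolding dom_U by blast
    with chain[of f h] show ?thesis by (blast dest: map_le_implies_dom_le)
  qed
  have "partial_hom U"
    unfolding partial_hom_def
  proof (intro conjI ballI)
    obtain f where f: "f \<in> C" using \<open>C \<noteq> {}\<close> by blast
    then have "bot \<in> dom f" "top \<in> dom f" "f bot = Some False" "f top = Some True"
      using partial_homs unfolding partial_hom_def by blast+
    then show "bot \<in> dom U" "top \<in> dom U" "U bot = Some False" "U top = Some True"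
      using dom_U agree[OF f] f by auto
  next
    fix a b assume "a \<in> dom U" "b \<in> dom U"
    then obtain k where k: "k \<in> C" "a \<in> dom k" "b \<in> dom k" using common_member by blast
    then have "sup a b \<in> dom k" "inf a b \<in> dom k"
      "k (sup a b) = Some (the (k a) \<or> the (k b))" "k (inf a b) = Some (the (k a) \<and> the (k b))"
      using partial_homs unfolding partial_hom_def by blast+
    then show "sup a b \<in> dom U" "inf a b \<in> dom U"
      "U (sup a b) = Some (the (U a) \<or> the (U b))"
      "U (inf a b) = Some (the (U a) \<and> the (U b))"
      using dom_U agree k by auto
  qed
  with ub show ?thesis by blast
qed

lemma partial_hom_extends_to_MPH:
  fixes h :: "'a::bounded_lattice \<Rightarrow> bool option"
  assumes "partial_hom h"
  obtains m where "MPH m" "h \<subseteq>\<^sub>m m"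
proof -
  let ?A = "{f. partial_hom f \<and> h \<subseteq>\<^sub>m f}"
  have po: "partial_order_on ?A (relation_of map_le ?A)"
    by (rule partial_order_on_relation_ofI) (auto intro: map_le_trans map_le_antisym)
  have chains_bounded: "\<exists>u\<in>?A. \<forall>f\<in>C. f \<subseteq>\<^sub>m u" if "C \<in> Chains (relation_of map_le ?A)" for C
  proof (cases "C = {}")
    case True
    then show ?thesis using assms by auto
  next
    case False
    have C: "C \<subseteq> ?A" "\<And>f g. f \<in> C \<Longrightarrow> g \<in> C \<Longrightarrow> f \<subseteq>\<^sub>m g \<or> g \<subseteq>\<^sub>m f"
      using that unfolding Chains_def relation_of_def by auto
    then obtain U where "partial_hom U" "\<forall>f\<in>C. f \<subseteq>\<^sub>m U"
      using partial_hom_chain_has_upper_bound[OF False] by blast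
    moreover have "h \<subseteq>\<^sub>m U" using False C(1) calculation(2) map_le_trans by blast
    ultimately show ?thesis by blast
  qed
  obtain m where "m \<in> ?A" "\<forall>f\<in>?A. m \<subseteq>\<^sub>m f \<longrightarrow> f = m"
    using predicate_Zorn[OF po chains_bounded] by blast
  then have "MPH m" "h \<subseteq>\<^sub>m m" unfolding MPH_def using map_le_trans by blast+
  then show ?thesis by (rule that)
qed

lemma partial_hom_filter_ideal:
  fixes F I :: "'a::bounded_lattice set"
  assumes "top \<in> F" and F_up: "\<And>a b. a \<in> F \<Longrightarrow> a \<le> b \<Longrightarrow> b \<in> F"
    and F_inf: "\<And>a b. a \<in> F \<Longrightarrow> b \<in> F \<Longrightarrow> inf a b \<in> F"
    and "bot \<in> I" and I_down: "\<And>a b. b \<in> I \<Longrightarrow> a \<le> b \<Longrightarrow> a \<in> I"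
    and I_sup: "\<And>a b. a \<in> I \<Longrightarrow> b \<in> I \<Longrightarrow> sup a b \<in> I"
    and "F \<inter> I = {}"
  shows "partial_hom (\<lambda>c. if c \<in> F then Some True else if c \<in> I then Some False else None)"
proof -
  define h where "h = (\<lambda>c. if c \<in> F then Some True else if c \<in> I then Some False else None)"
  have on_F: "h c = Some True" if "c \<in> F" for c
    using that by (simp add: h_def)
  have on_I: "h c = Some False" if "c \<in> I" for c
  proof -
    have "c \<notin> F" using that \<open>F \<inter> I = {}\<close> unfolding disjoint_iff by blast
    with that show ?thesis by (simp add: h_def)
  qed
  have dom_h: "dom h = F \<union> I"
    unfolding h_def dom_def by auto
  have F_sup: "sup a b \<in> F" if "a \<in> F \<or> b \<in> F" for a b
    using that F_up[of a "sup a b"] F_up[of b "sup a b"] by auto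
  have I_inf: "inf a b \<in> I" if "a \<in> I \<or> b \<in> I" for a b
    using that I_down[of a "inf a b"] I_down[of b "inf a b"] by auto
  have "partial_hom h"
    unfolding partial_hom_def dom_h
  proof (intro conjI ballI)
    show "bot \<in> F \<union> I" "top \<in> F \<union> I" "h bot = Some False" "h top = Some True"
      using assms(1,4) on_F on_I by simp_all
  next
    fix a b assume a: "a \<in> F \<union> I" and b: "b \<in> F \<union> I"
    show "sup a b \<in> F \<union> I" "inf a b \<in> F \<union> I"
      using a b F_sup I_sup F_inf I_inf by blast+
    show "h (sup a b) = Some (the (h a) \<or> the (h b))"
    proof (cases "a \<in> F \<or> b \<in> F")
      case True
      then have "h a = Some True \<or> h b = Some True" using on_F by blast
      with on_F[OF F_sup[OF True]] show ?thesis by auto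
    next
      case False
      with a b have "a \<in> I" "b \<in> I" by blast+
      then show ?thesis using on_I I_sup by simp
    qed
    show "h (inf a b) = Some (the (h a) \<and> the (h b))"
    proof (cases "a \<in> I \<or> b \<in> I")
      case True
      then have "h a = Some False \<or> h b = Some False" using on_I by blast
      with on_I[OF I_inf[OF True]] show ?thesis by auto
    next
      case False
      with a b have "a \<in> F" "b \<in> F" by blast+
      then show ?thesis using on_F F_inf by simp
    qed
  qed
  then show ?thesis by (simp only: h_def)
qed

lemma MPH_extending_True_and_dualg_False:
  fixes x :: "'a::orthocomplemented_lattice \<Rightarrow> bool option"
  assumes x: "partial_hom x"
  obtains z where "MPH z" "\<And>a. x a = Some True \<Longrightarrow> z a = Some True"
    "\<And>a. dualg x a = Some False \<Longrightarrow> z a = Some False"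
proof -
  have x_bot: "x bot = Some False" and x_top: "x top = Some True"
    using x unfolding partial_hom_def by blast+
  have x_inf: "x (inf a b) = Some True" if "x a = Some True" "x b = Some True" for a b
  proof -
    have "a \<in> dom x" "b \<in> dom x" using that by blast+
    then have "x (inf a b) = Some (the (x a) \<and> the (x b))"
      using x unfolding partial_hom_def by blast
    with that show ?thesis by simp
  qed
  define F where "F = {c. \<exists>a. x a = Some True \<and> a \<le> c}"
  define I where "I = {c. \<exists>a. x a = Some True \<and> c \<le> - a}"
  have disjoint: "F \<inter> I = {}"
  proof (intro equals0I)
    fix c assume "c \<in> F \<inter> I"
    then obtain a1 a2 where a: "x a1 = Some True" "a1 \<le> c" "x a2 = Some True" "c \<le> - a2"
      unfolding F_def I_def by blast
    then have "inf a1 a2 \<le> inf (- a2) a2" by (meson inf_mono order_trans order_refl)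
    then have "inf a1 a2 = bot" by (simp add: inf_commute bot_unique)
    with x_inf[OF a(1) a(3)] x_bot show False by simp
  qed
  let ?h = "\<lambda>c. if c \<in> F then Some True else if c \<in> I then Some False else None"
  have "partial_hom ?h"
  proof (rule partial_hom_filter_ideal)
    show "top \<in> F" "bot \<in> I"
      using x_top unfolding F_def I_def by auto
    show "b \<in> F" if "a \<in> F" "a \<le> b" for a b
      using that unfolding F_def by (blast intro: order_trans)
    show "a \<in> I" if "b \<in> I" "a \<le> b" for a b
      using that unfolding I_def by (blast intro: order_trans)
    show "inf b c \<in> F" if "b \<in> F" "c \<in> F" for b c
      using that x_inf unfolding F_def by (blast intro: inf_mono)
    show "sup b c \<in> I" if bc: "b \<in> I" "c \<in> I" for b c
    proof -
      obtain a1 a2 where "x a1 = Some True" "b \<le> - a1" "x a2 = Some True" "c \<le> - a2"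
        using bc unfolding I_def by blast
      moreover from this have "sup b c \<le> - inf a1 a2" by (simp add: le_supI1 le_supI2)
      ultimately show ?thesis using x_inf unfolding I_def by blast
    qed
  qed (fact disjoint)
  then obtain z where z: "MPH z" "?h \<subseteq>\<^sub>m z" by (rule partial_hom_extends_to_MPH)
  show ?thesis
  proof (rule that[OF z(1)])
    fix a assume "x a = Some True"
    then have "a \<in> F" unfolding F_def by blast
    then show "z a = Some True" by (intro map_le_SomeD[OF z(2)]) simp
  next
    fix a assume "dualg x a = Some False"
    then have "x (- a) = Some True" by (simp add: dualg_eq_Some_iff)
    then have "a \<in> I" unfolding I_def by (auto intro!: exI[of _ "- a"])
    moreover from this have "a \<notin> F" using disjoint unfolding disjoint_iff by blast
    ultimately show "z a = Some False" by (intro map_le_SomeD[OF z(2)]) simp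
  qed
qed

lemma succE_subset_if_True_preserved:
  assumes "\<And>a. x a = Some True \<Longrightarrow> z a = Some True"
  shows "succE z \<subseteq> succE x"
  using assms unfolding succE_def dualE_iff by blast

lemma predE_subset_if_False_preserved:
  assumes "\<And>a. y a = Some False \<Longrightarrow> z a = Some False"
  shows "predE z \<subseteq> predE y"
  using assms unfolding predE_def dualE_iff by blast

theorem theorem4p5:
  fixes x y :: "'a::orthocomplemented_lattice \<Rightarrow> bool option"
  assumes "x \<in> PL" and "y \<in> PL"
  shows "dualg (dualg x) = x \<and>
         (succE x \<subseteq> succE y \<longrightarrow> predE (dualg x) \<subseteq> predE (dualg y)) \<and>
         (predE x \<subseteq> predE y \<longrightarrow> succE (dualg x) \<subseteq> succE (dualg y)) \<and>
         (\<exists>z\<in>PL. succE z \<subseteq> succE x \<and> predE z \<subseteq> predE (dualg x))"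
proof (intro conjI impI)
  show "dualg (dualg x) = x" by simp
  show "predE (dualg x) \<subseteq> predE (dualg y)" if "succE x \<subseteq> succE y"
    using that by (simp add: predE_dualg image_mono)
  show "succE (dualg x) \<subseteq> succE (dualg y)" if "predE x \<subseteq> predE y"
    using that by (simp add: succE_dualg image_mono)
  have "partial_hom x" using assms(1) unfolding PL_def MPH_def by blast
  then obtain z where z: "MPH z" "\<And>a. x a = Some True \<Longrightarrow> z a = Some True"
    "\<And>a. dualg x a = Some False \<Longrightarrow> z a = Some False"
    by (rule MPH_extending_True_and_dualg_False) blast
  show "\<exists>z\<in>PL. succE z \<subseteq> succE x \<and> predE z \<subseteq> predE (dualg x)"
  proof (intro bexI conjI)
    show "z \<in> PL" using z(1) by (simp add: PL_def)
    show "succE z \<subseteq> succE x" using z(2) by (rule succE_subset_if_True_preserved)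
    show "predE z \<subseteq> predE (dualg x)" using z(3) by (rule predE_subset_if_False_preserved)
  qed
qed

end
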